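(* Let $q=2^m$, let $d>3$ be an odd integer and $f(x)=x^d$. Let $S_1,S_2\subset\mathbb{P}^3(\overline{\mathbb{F}}_q)$ (coordinates $(x:y:z:t)$) be defined by $P_f(x,y,z)=0$ and $P_f(x,y,t)=0$, let $X=S_1\cap S_2$, and let $H_7$ be the plane $x+y+z+t=0$. Then $X\cap H_7$ equals the curve $C_7:=S_2\cap H_7$.
   Context: For $f(x)=x^d$, $P_f(x,y,z)=\frac{x^d+y^d+z^d+(x+y+z)^d}{(x+y)(x+z)(y+z)}$, a homogeneous polynomial (exact division in characteristic 2). *)

theory Defs
  imports "HOL-Computational_Algebra.Polynomial" "HOL-Library.Z2" "HOL-Algebra.Algebraic_Closure_Type"
begin

text \<open>The base field: an algebraic closure of F_2 (which is also an algebraic closure of F_q, q = 2^m).\<close>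
type_synonym K = "bit alg_closure"

text \<open>Trivariate polynomials in x,y,z over K as nested univariate polynomials:
  innermost variable x, then y, outermost z.\<close>
type_synonym tpoly = "K poly poly poly"

definition eval3 :: "tpoly \<Rightarrow> K \<Rightarrow> K \<Rightarrow> K \<Rightarrow> K" where
  "eval3 P x y z = poly (map_poly (\<lambda>c. poly (map_poly (\<lambda>r. poly r x) c) y) P) z"

definition varX :: tpoly where "varX = [:[:[:0, 1:]:]:]"
definition varY :: tpoly where "varY = [:[:0, 1:]:]"
definition varZ :: tpoly where "varZ = [:0, 1:]"

definition Pf :: "nat \<Rightarrow> tpoly" where
  "Pf d = (varX ^ d + varY ^ d + varZ ^ d + (varX + varY + varZ) ^ d)
          div ((varX + varY) * (varX + varZ) * (varY + varZ))"

type_synonym vec4 = "K \<times> K \<times> K \<times> K"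

definition scale4 :: "K \<Rightarrow> vec4 \<Rightarrow> vec4" where
  "scale4 c v = (case v of (x, y, z, t) \<Rightarrow> (c * x, c * y, c * z, c * t))"

definition proj_rel :: "vec4 rel" where
  "proj_rel = {(v, w). v \<noteq> (0,0,0,0) \<and> w \<noteq> (0,0,0,0) \<and> (\<exists>c. c \<noteq> 0 \<and> w = scale4 c v)}"

definition P3 :: "vec4 set set" where
  "P3 = (UNIV - {(0,0,0,0)}) // proj_rel"

definition proj_zero :: "(vec4 \<Rightarrow> bool) \<Rightarrow> vec4 set set" where
  "proj_zero F = {p \<in> P3. \<forall>v \<in> p. F v}"

definition S1 :: "nat \<Rightarrow> vec4 set set" where
  "S1 d = proj_zero (\<lambda>(x, y, z, t). eval3 (Pf d) x y z = 0)"

definition S2 :: "nat \<Rightarrow> vec4 set set" where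
  "S2 d = proj_zero (\<lambda>(x, y, z, t). eval3 (Pf d) x y t = 0)"

definition H7 :: "vec4 set set" where
  "H7 = proj_zero (\<lambda>(x, y, z, t). x + y + z + t = 0)"

definition Xcurve :: "nat \<Rightarrow> vec4 set set" where
  "Xcurve d = S1 d \<inter> S2 d"

definition C7 :: "nat \<Rightarrow> vec4 set set" where
  "C7 d = S2 d \<inter> H7"

end

theory Submission
  imports Defs
begin

text \<open>In characteristic 2 the substitution \<open>z \<mapsto> x + y + z\<close> fixes the numerator
  \<open>x^d + y^d + z^d + (x + y + z)^d\<close> and the denominator \<open>(x + y)(x + z)(y + z)\<close> of \<open>P_f\<close>
  (it swaps the last two factors); the division being exact, it fixes \<open>P_f\<close> itself.
  On \<open>H\<^sub>7\<close> we have \<open>t = x + y + z\<close>, so \<open>P_f(x, y, t) = 0\<close> forces \<open>P_f(x, y, z) = 0\<close>,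
  i.e. \<open>S\<^sub>2 \<inter> H\<^sub>7 \<subseteq> S\<^sub>1\<close>.\<close>

lemma CHAR_bit: "CHAR(bit) = 2"
  by (rule CHAR_eq_posI) (auto dest: less_2_cases)

lemma CHAR_K: "CHAR(K) = 2"
  by (simp add: CHAR_bit)

lemma add_self_CHAR_2:
  fixes u :: "'a::comm_ring_1"
  assumes "CHAR('a) = 2"
  shows "u + u = 0"
  using uminus_CHAR_2[OF assms, of u] by (simp add: add_eq_0_iff)

lemma add_add_self_CHAR_2:
  fixes u v :: "'a::comm_ring_1"
  assumes "CHAR('a) = 2"
  shows "u + (u + v) = v"
  using minus_CHAR_2[OF assms, of v u] by (simp add: algebra_simps)

lemma add_eq_0_imp_eq_CHAR_2:
  fixes s t :: "'a::comm_ring_1"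
  assumes "CHAR('a) = 2" and "s + t = 0"
  shows "t = s"
  using assms(2) uminus_CHAR_2[OF assms(1), of s] by (simp add: add_eq_0_iff)

lemma add_dvd_power_add_power_CHAR_2:
  fixes u v :: "'a::comm_ring_1"
  assumes "CHAR('a) = 2"
  shows "u + v dvd u ^ n + v ^ n"
  using power_diff_sumr2[of u n v] by (simp add: minus_CHAR_2[OF assms])

lemma map_poly_add:
  assumes "\<And>a b. f (a + b) = f a + f b" "f 0 = 0"
  shows "map_poly f (p + q) = map_poly f p + map_poly f q"
  by (rule poly_eqI) (simp add: coeff_map_poly assms)

lemma map_poly_mult:
  fixes f :: "'a::comm_semiring_0 \<Rightarrow> 'b::comm_semiring_0"
  assumes add: "\<And>a b. f (a + b) = f a + f b" and mult: "\<And>a b. f (a * b) = f a * f b"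
    and zero: "f 0 = 0"
  shows "map_poly f (p * q) = map_poly f p * map_poly f q"
proof (induction p)
  case (pCons a p)
  have "map_poly f (smult a q) = smult (f a) (map_poly f q)"
    by (rule poly_eqI) (simp add: coeff_map_poly mult zero)
  then show ?case
    by (simp add: map_poly_pCons map_poly_add add zero pCons.IH)
qed simp

lemma map_poly_pcompose:
  fixes f :: "'a::comm_semiring_0 \<Rightarrow> 'b::comm_semiring_0"
  assumes "\<And>a b. f (a + b) = f a + f b" "\<And>a b. f (a * b) = f a * f b" "f 0 = 0"
  shows "map_poly f (pcompose p q) = pcompose (map_poly f p) (map_poly f q)"
  by (induction p)
    (simp_all add: pcompose_pCons map_poly_pCons map_poly_add map_poly_mult assms)

lemma pcompose_pow: "pcompose (p ^ n) q = pcompose p q ^ n"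
  by (induction n) (simp_all add: pcompose_1 pcompose_mult)

lemma pcompose_X: "pcompose [:0, 1:] (q :: 'a::comm_semiring_1 poly) = q"
  by (simp add: pcompose_pCons)

lemma pcompose_div:
  fixes p q r :: "'a::idom_divide poly"
  assumes "p dvd q" and "pcompose p r \<noteq> 0"
  shows "pcompose (q div p) r = pcompose q r div pcompose p r"
proof -
  obtain s where "q = p * s"
    using assms(1) by (rule dvdE)
  moreover have "p \<noteq> 0"
    using assms(2) by auto
  ultimately show ?thesis
    using assms(2) by (simp add: pcompose_mult)
qed

definition pf_numerator :: "'a::comm_ring_1 \<Rightarrow> 'a \<Rightarrow> nat \<Rightarrow> 'a poly" where
  "pf_numerator a b d = [:a:] ^ d + [:b:] ^ d + [:0, 1:] ^ d + ([:a:] + [:b:] + [:0, 1:]) ^ d"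

definition pf_denominator :: "'a::comm_ring_1 \<Rightarrow> 'a \<Rightarrow> 'a poly" where
  "pf_denominator a b = ([:a:] + [:b:]) * ([:a:] + [:0, 1:]) * ([:b:] + [:0, 1:])"

lemma pcompose_pf_numerator:
  fixes a b :: "'a::comm_ring_1"
  assumes "CHAR('a) = 2"
  shows "pcompose (pf_numerator a b d) [:a + b, 1:] = pf_numerator a b d"
proof -
  define u where "u = [:a:] + [:b:]"
  have shift: "[:a + b, 1:] = u + [:0, 1:]"
    by (simp add: u_def)
  have unshift: "u + (u + [:0, 1:]) = [:0, 1:]"
    by (rule add_add_self_CHAR_2) (simp add: assms)
  have "pcompose (pf_numerator a b d) [:a + b, 1:]
      = [:a:] ^ d + [:b:] ^ d + (u + [:0, 1:]) ^ d + (u + (u + [:0, 1:])) ^ d"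
    unfolding pf_numerator_def shift
    by (simp only: pcompose_add pcompose_pow pcompose_const pcompose_X u_def add.assoc)
  also have "\<dots> = pf_numerator a b d"
    unfolding unshift by (simp only: pf_numerator_def u_def add_ac)
  finally show ?thesis .
qed

lemma pcompose_pf_denominator:
  fixes a b :: "'a::comm_ring_1"
  assumes "CHAR('a) = 2"
  shows "pcompose (pf_denominator a b) [:a + b, 1:] = pf_denominator a b"
proof -
  have char: "CHAR('a poly) = 2"
    by (simp add: assms)
  have "[:a:] + [:a + b, 1:] = [:a:] + ([:a:] + ([:b:] + [:0, 1:]))"
    by simp
  also have "\<dots> = [:b:] + [:0, 1:]"
    by (rule add_add_self_CHAR_2[OF char])
  finally have swap_a: "[:a:] + [:a + b, 1:] = [:b:] + [:0, 1:]" .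
  have "[:b:] + [:a + b, 1:] = [:b:] + ([:b:] + ([:a:] + [:0, 1:]))"
    by simp
  also have "\<dots> = [:a:] + [:0, 1:]"
    by (rule add_add_self_CHAR_2[OF char])
  finally have swap_b: "[:b:] + [:a + b, 1:] = [:a:] + [:0, 1:]" .
  show ?thesis
    unfolding pf_denominator_def
    by (simp only: pcompose_add pcompose_mult pcompose_const pcompose_X swap_a swap_b mult_ac)
qed

lemma pf_numerator_divisible_sum:
  fixes a b :: "'a::comm_ring_1"
  assumes "CHAR('a) = 2"
  shows "[:a:] + [:b:] dvd pf_numerator a b d"
proof -
  have char: "CHAR('a poly) = 2"
    by (simp add: assms)
  have "[:0, 1:] + ([:a:] + [:b:] + [:0, 1:]) = [:a:] + [:b:]"
    using add_add_self_CHAR_2[OF char, of "[:0, 1:]" "[:a:] + [:b:]"] by (simp only: add_ac)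
  then have "[:a:] + [:b:] dvd [:0, 1:] ^ d + ([:a:] + [:b:] + [:0, 1:]) ^ d"
    using add_dvd_power_add_power_CHAR_2[OF char, of "[:0, 1:]" "[:a:] + [:b:] + [:0, 1:]" d]
    by (simp only:)
  with add_dvd_power_add_power_CHAR_2[OF char, of "[:a:]" "[:b:]" d]
  have "[:a:] + [:b:] dvd ([:a:] ^ d + [:b:] ^ d) + ([:0, 1:] ^ d + ([:a:] + [:b:] + [:0, 1:]) ^ d)"
    by (rule dvd_add)
  then show ?thesis
    by (simp only: pf_numerator_def add.assoc)
qed

lemma poly_pf_numerator:
  "poly (pf_numerator a b d) c = a ^ d + b ^ d + c ^ d + (a + b + c) ^ d"
  by (simp add: pf_numerator_def)

lemma pf_denominator_dvd_numerator:
  fixes a b :: "'a::idom"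
  assumes char: "CHAR('a) = 2" and "a \<noteq> b"
  shows "pf_denominator a b dvd pf_numerator a b d"
proof -
  have "a + b \<noteq> 0"
    using assms by (simp add: minus_CHAR_2[symmetric])
  have "[:a + b:] dvd pf_numerator a b d"
    using pf_numerator_divisible_sum[OF char, of a b d] by simp
  then obtain M where M: "pf_numerator a b d = [:a + b:] * M"
    by (rule dvdE)
  have "a + b + a = b"
    using add_add_self_CHAR_2[OF char, of a b] by (simp only: ac_simps)
  then have "poly (pf_numerator a b d) a = (a ^ d + b ^ d) + (a ^ d + b ^ d)"
    unfolding poly_pf_numerator by (simp only: ac_simps)
  then have "poly (pf_numerator a b d) a = 0"
    by (simp only: add_self_CHAR_2[OF char])
  then have "poly M (- a) = 0"
    using \<open>a + b \<noteq> 0\<close> by (simp add: M uminus_CHAR_2[OF char])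
  then obtain M' where M': "M = [:a, 1:] * M'"
    by (auto simp: dvd_iff_poly_eq_0[symmetric])
  have "a + b + b = a"
    using add_add_self_CHAR_2[OF char, of b a] by (simp only: ac_simps)
  then have "poly (pf_numerator a b d) b = (a ^ d + b ^ d) + (a ^ d + b ^ d)"
    unfolding poly_pf_numerator by (simp only: ac_simps)
  then have "poly (pf_numerator a b d) b = 0"
    by (simp only: add_self_CHAR_2[OF char])
  then have "poly M' (- b) = 0"
    using \<open>a + b \<noteq> 0\<close> by (simp add: M M' uminus_CHAR_2[OF char] add.commute)
      (metis distrib_right mult_eq_0_iff)
  then obtain Q where Q: "M' = [:b, 1:] * Q"
    by (auto simp: dvd_iff_poly_eq_0[symmetric])
  have "pf_denominator a b = [:a + b:] * [:a, 1:] * [:b, 1:]"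
    by (simp add: pf_denominator_def)
  then have "pf_numerator a b d = pf_denominator a b * Q"
    by (simp only: M M' Q mult.assoc)
  then show ?thesis
    by simp
qed

lemma pf_denominator_nonzero:
  fixes a b :: "'a::idom"
  assumes "CHAR('a) = 2" and "a \<noteq> b"
  shows "pf_denominator a b \<noteq> 0"
  using assms by (simp add: pf_denominator_def minus_CHAR_2[symmetric])

lemma Pf_eq_pf_numerator_div_denominator:
  "Pf d = pf_numerator [:[:0, 1:]:] [:0, 1:] d div pf_denominator [:[:0, 1:]:] [:0, 1:]"
  unfolding Pf_def pf_numerator_def pf_denominator_def varX_def varY_def varZ_def ..

lemma pcompose_Pf: "pcompose (Pf d) (varX + varY + varZ) = Pf d"
proof -
  define a :: "K poly poly" where "a = [:[:0, 1:]:]"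
  define b :: "K poly poly" where "b = [:0, 1:]"
  have char: "CHAR(K poly poly) = 2"
    by (simp add: CHAR_bit)
  have "a \<noteq> b"
    unfolding a_def b_def by (metis coeff_pCons_0 pCons_eq_0_iff zero_neq_one)
  with char have "pcompose (pf_numerator a b d div pf_denominator a b) [:a + b, 1:]
      = pf_numerator a b d div pf_denominator a b"
    by (simp add: pcompose_div pf_denominator_dvd_numerator pf_denominator_nonzero
        pcompose_pf_numerator pcompose_pf_denominator)
  moreover have "varX + varY + varZ = [:a + b, 1:]"
    by (simp add: a_def b_def varX_def varY_def varZ_def)
  ultimately show ?thesis
    unfolding Pf_eq_pf_numerator_div_denominator a_def b_def by simp
qed

lemma eval3_pcompose: "eval3 (pcompose P Q) x y z = eval3 P x y (eval3 Q x y z)"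
  unfolding eval3_def
  by (subst map_poly_pcompose) (simp_all add: map_poly_add map_poly_mult poly_pcompose)

lemma eval3_Pf_shift: "eval3 (Pf d) x y (x + y + z) = eval3 (Pf d) x y z"
proof -
  have "eval3 (varX + varY + varZ) x y z = x + y + z"
    by (simp add: eval3_def varX_def varY_def varZ_def map_poly_pCons)
  then show ?thesis
    by (metis eval3_pcompose pcompose_Pf)
qed

lemma S2_Int_H7_subset_S1: "S2 d \<inter> H7 \<subseteq> S1 d"
proof
  fix p assume p: "p \<in> S2 d \<inter> H7"
  show "p \<in> S1 d"
    unfolding S1_def proj_zero_def
  proof (intro CollectI conjI ballI)
    show "p \<in> P3"
      using p by (simp add: H7_def proj_zero_def)
    fix v assume "v \<in> p"
    obtain x y z t where v: "v = (x, y, z, t)"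
      by (cases v)
    from p \<open>v \<in> p\<close> have "x + y + z + t = 0" and "eval3 (Pf d) x y t = 0"
      by (auto simp: S2_def H7_def proj_zero_def v)
    then have "eval3 (Pf d) x y z = 0"
      using add_eq_0_imp_eq_CHAR_2[OF CHAR_K] eval3_Pf_shift by metis
    then show "case v of (x, y, z, t) \<Rightarrow> eval3 (Pf d) x y z = 0"
      by (simp add: v)
  qed
qed

theorem proposition3p2:
  fixes d :: nat
  assumes "odd d" and "d > 3"
  shows "Xcurve d \<inter> H7 = C7 d"
  using S2_Int_H7_subset_S1[of d] unfolding Xcurve_def C7_def by blast

end
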